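(* Let $K$ be a field, $X=\{x_1,\dots,x_n\}$, $H=\langle h_1,\dots,h_r\rangle\subseteq K[X]$, $f\in K[X]$, let $Y=\{x_1,\dots,x_d\}$ be a maximum-size set of independent variables for $H$, let $Z=\{x_{d+1},\dots,x_n\}$ and $H'=HK(Y)[Z]$. Then $f\in\sqrt{H'}$ if and only if $\langle h_1,\dots,h_r,f\cdot t-1\rangle K[Y,Z,t]\cap K[Y]\neq\langle 0\rangle$, where $t$ is a new variable.
   Context: A set $Y=\{x_1,\dots,x_d\}\subseteq X$ is a maximum-size set of independent variables for $H$ if $H\cap K[Y]=\langle 0\rangle$ and for every subset $W\subseteq X$ with more than $d$ elements $H\cap K[W]\neq\langle 0\rangle$. $K(Y)$ is the field of rational functions in $x_1,\dots,x_d$ and $\sqrt{H'}$ is the radical of $H'$ in $K(Y)[Z]$. *)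

theory Defs
  imports "HOL-Library.Poly_Mapping" "HOL-Computational_Algebra.Fraction_Field"
begin

text \<open>Multivariate polynomials over coefficients 'a in the variables x_0, x_1, ... (indexed by nat):
  finitely supported maps from monomials (exponent vectors) to coefficients.\<close>
type_synonym 'a mpoly = "(nat \<Rightarrow>\<^sub>0 nat) \<Rightarrow>\<^sub>0 'a"

definition PolyIn :: "nat set \<Rightarrow> ('a::zero) mpoly set" where
  "PolyIn V = {p. \<forall>m \<in> Poly_Mapping.keys p. Poly_Mapping.keys m \<subseteq> V}"

definition Var :: "nat \<Rightarrow> ('a::{zero,one}) mpoly" where
  "Var i = Poly_Mapping.single (Poly_Mapping.single i 1) 1"

definition gen_ideal :: "'r::comm_ring_1 set \<Rightarrow> 'r set \<Rightarrow> 'r set" where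
  "gen_ideal R G = {x. \<exists>(I::nat set) c g. finite I \<and> (\<forall>i\<in>I. c i \<in> R \<and> g i \<in> G)
                        \<and> x = (\<Sum>i\<in>I. c i * g i)}"

definition radical_in :: "'r::comm_ring_1 set \<Rightarrow> 'r set \<Rightarrow> 'r set" where
  "radical_in R J = {x \<in> R. \<exists>k::nat. x ^ k \<in> J}"

definition mon_lo :: "nat \<Rightarrow> (nat \<Rightarrow>\<^sub>0 nat) \<Rightarrow> (nat \<Rightarrow>\<^sub>0 nat)" where
  "mon_lo d m = Poly_Mapping.mapp (\<lambda>v c. if v < d then c else 0) m"
definition mon_hi :: "nat \<Rightarrow> (nat \<Rightarrow>\<^sub>0 nat) \<Rightarrow> (nat \<Rightarrow>\<^sub>0 nat)" where
  "mon_hi d m = Poly_Mapping.mapp (\<lambda>v c. if d \<le> v then c else 0) m"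

text \<open>The natural embedding K[X] to K(Y)[Z], Y = {x_i. i < d}, Z = the other variables:
  elements of K(Y)[Z] are polynomials (in all variables, only those in Z used) with coefficients
  in the fraction field of K[Y] (represented as the fraction field of the polynomial ring).\<close>
definition emb :: "nat \<Rightarrow> ('a::idom) mpoly \<Rightarrow> ('a mpoly fract) mpoly" where
  "emb d p = (\<Sum>m \<in> Poly_Mapping.keys p.
      Poly_Mapping.single (mon_hi d m)
        (Fract (Poly_Mapping.single (mon_lo d m) (Poly_Mapping.lookup p m)) 1))"

end

theory Submission
  imports Defs
begin

text \<open>
  Both directions are the Rabinowitsch trick; the variable t is x_n.
  If f^k lies in H K(Y)[Z], clearing the denominators of a representation yields
  a nonzero g in K[Y] with g f^k in H, and then
  g = t^k (g f^k) - g (sum_{i<k} (f t)^i) (f t - 1) lies in <H, f t - 1>.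
  Conversely, substituting t := 1/f into a representation of a nonzero g in <H, f t - 1> \<inter> K[Y]
  kills the generator f t - 1 and shows g f^N in H K(Y)[Z] for some N; since g is a unit
  of K(Y)[Z], f^N lies in H K(Y)[Z].

  Here K(Y) is modelled by the fraction field of all of K[x_0, x_1, ...], so a common
  denominator may involve variables x_v with v >= d. They are eliminated by exchanging them
  with the variables of the outer polynomial ring (swap_vars) and comparing the
  coefficients of a single monomial.
\<close>

definition ring_hom :: "('a::comm_ring_1 \<Rightarrow> 'b::comm_ring_1) \<Rightarrow> bool" where
  "ring_hom \<phi> \<longleftrightarrow>
    (\<forall>x y. \<phi> (x + y) = \<phi> x + \<phi> y) \<and> (\<forall>x y. \<phi> (x * y) = \<phi> x * \<phi> y) \<and> \<phi> 1 = 1"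

lemma ring_hom_add: "ring_hom \<phi> \<Longrightarrow> \<phi> (x + y) = \<phi> x + \<phi> y"
  by (simp add: ring_hom_def)

lemma ring_hom_mult: "ring_hom \<phi> \<Longrightarrow> \<phi> (x * y) = \<phi> x * \<phi> y"
  by (simp add: ring_hom_def)

lemma ring_hom_one: "ring_hom \<phi> \<Longrightarrow> \<phi> 1 = 1"
  by (simp add: ring_hom_def)

lemma ring_hom_zero: "ring_hom \<phi> \<Longrightarrow> \<phi> 0 = 0"
  using ring_hom_add[of \<phi> 0 0] by simp

lemma ring_hom_diff: "ring_hom \<phi> \<Longrightarrow> \<phi> (x - y) = \<phi> x - \<phi> y"
  using ring_hom_add[of \<phi> "x - y" y] by (simp add: eq_diff_eq)

lemma ring_hom_sum: "ring_hom \<phi> \<Longrightarrow> \<phi> (sum f A) = (\<Sum>a\<in>A. \<phi> (f a))"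
  by (induction A rule: infinite_finite_induct) (auto simp: ring_hom_zero ring_hom_add)

lemma ring_hom_prod: "ring_hom \<phi> \<Longrightarrow> \<phi> (prod f A) = (\<Prod>a\<in>A. \<phi> (f a))"
  by (induction A rule: infinite_finite_induct) (auto simp: ring_hom_one ring_hom_mult)

lemma ring_hom_power: "ring_hom \<phi> \<Longrightarrow> \<phi> (x ^ k) = \<phi> x ^ k"
  by (induction k) (auto simp: ring_hom_one ring_hom_mult)

lemma ring_hom_comp: "ring_hom \<phi> \<Longrightarrow> ring_hom \<psi> \<Longrightarrow> ring_hom (\<lambda>x. \<phi> (\<psi> x))"
  by (simp add: ring_hom_def)

lemma ring_hom_Fract_1: "ring_hom (\<lambda>a::'a::idom. Fract a 1)"
  by (simp add: ring_hom_def One_fract_def)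

lemma Fract_1_eq_iff: "Fract (a::'a::idom) 1 = Fract b 1 \<longleftrightarrow> a = b"
  by (simp add: eq_fract)

lemma Fract_1_eq_0_iff: "Fract (a::'a::idom) 1 = 0 \<longleftrightarrow> a = 0"
  by (simp add: Zero_fract_def eq_fract)

lemma Fract_self: "(a::'a::idom) \<noteq> 0 \<Longrightarrow> Fract a a = 1"
  by (subst fract_collapse(2)[symmetric]) (simp add: eq_fract)

lemma common_denominator:
  fixes X :: "'a::idom fract set"
  assumes "finite X"
  shows "\<exists>D. D \<noteq> 0 \<and> (\<forall>x\<in>X. \<exists>a. Fract D 1 * x = Fract a 1)"
  using assms
proof (induction X rule: finite_induct)
  case empty
  show ?case by (intro exI[of _ 1]) simp
next
  case (insert x X)
  then obtain D where D: "D \<noteq> 0" "\<forall>y\<in>X. \<exists>a. Fract D 1 * y = Fract a 1"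
    by blast
  obtain a b where x: "x = Fract a b" "b \<noteq> 0"
    by (cases x)
  have "Fract (D * b) 1 * x = Fract (D * b * a) b"
    using x by simp
  also have "\<dots> = Fract (D * a) 1"
    using x(2) by (simp add: eq_fract)
  finally have "Fract (D * b) 1 * x = Fract (D * a) 1" .
  moreover have "\<exists>a'. Fract (D * b) 1 * y = Fract a' 1" if "y \<in> X" for y
  proof -
    obtain a' where "Fract D 1 * y = Fract a' 1"
      using D(2) \<open>y \<in> X\<close> by blast
    have "Fract (D * b) 1 * y = Fract b 1 * (Fract D 1 * y)"
      by (simp add: mult.assoc mult.commute)
    also have "\<dots> = Fract (b * a') 1"
      by (simp add: \<open>Fract D 1 * y = Fract a' 1\<close>)
    finally show ?thesis ..
  qed
  ultimately show ?case
    using D(1) x(2) by (intro exI[of _ "D * b"]) auto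
qed

abbreviation Const :: "'b::zero \<Rightarrow> 'b mpoly" where
  "Const a \<equiv> Poly_Mapping.single 0 a"

lemma ring_hom_Const: "ring_hom (Const :: 'b::comm_ring_1 \<Rightarrow> 'b mpoly)"
  by (simp add: ring_hom_def single_add mult_single)

lemma poly_mapping_sum_single:
  "(p::'k \<Rightarrow>\<^sub>0 'b::comm_monoid_add) = (\<Sum>m\<in>Poly_Mapping.keys p. Poly_Mapping.single m (Poly_Mapping.lookup p m))"
  by (rule poly_mapping_eqI) (simp add: lookup_sum lookup_single when_def in_keys_iff)

lemma mult_eq_sum_single:
  "(p::'k::comm_monoid_add \<Rightarrow>\<^sub>0 'b::comm_semiring_0) * q =
    (\<Sum>m\<in>Poly_Mapping.keys p. \<Sum>m'\<in>Poly_Mapping.keys q.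
       Poly_Mapping.single (m + m') (Poly_Mapping.lookup p m * Poly_Mapping.lookup q m'))"
  by (subst (1 2) poly_mapping_sum_single) (simp add: sum_product mult_single)

lemma lookup_mult_Const:
  "Poly_Mapping.lookup (q * Const a) m = Poly_Mapping.lookup q m * (a::'b::comm_ring_1)"
  by (simp add: mult_eq_sum_single[of q] lookup_sum lookup_single when_def in_keys_iff)

lemma Var_power: "(Var v :: 'a::comm_ring_1 mpoly) ^ k = Poly_Mapping.single (Poly_Mapping.single v k) 1"
  by (induction k) (simp_all add: Var_def mult_single single_add[symmetric])

lemma PolyIn_zero [simp]: "0 \<in> PolyIn V"
  by (simp add: PolyIn_def)

lemma PolyIn_Const [simp]: "Const a \<in> PolyIn V"
  by (simp add: PolyIn_def)

lemma PolyIn_one [simp]: "(1::'a::comm_ring_1 mpoly) \<in> PolyIn V"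
  using PolyIn_Const[of "1::'a" V] by simp

lemma PolyIn_Var: "v \<in> V \<Longrightarrow> (Var v :: 'a::comm_ring_1 mpoly) \<in> PolyIn V"
  by (simp add: PolyIn_def Var_def)

lemma PolyIn_single: "Poly_Mapping.keys m \<subseteq> V \<Longrightarrow> Poly_Mapping.single m a \<in> PolyIn V"
  by (simp add: PolyIn_def)

lemma PolyIn_UNIV [simp]: "p \<in> PolyIn UNIV"
  by (simp add: PolyIn_def)

lemma PolyIn_mono: "p \<in> PolyIn V \<Longrightarrow> V \<subseteq> W \<Longrightarrow> p \<in> PolyIn W"
  unfolding PolyIn_def by blast

lemma PolyIn_add: "p \<in> PolyIn V \<Longrightarrow> q \<in> PolyIn V \<Longrightarrow> p + q \<in> PolyIn V"
  unfolding PolyIn_def using keys_add[of p q] by auto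

lemma PolyIn_diff: "p \<in> PolyIn V \<Longrightarrow> q \<in> PolyIn V \<Longrightarrow> p - (q::'a::comm_ring_1 mpoly) \<in> PolyIn V"
  using PolyIn_add[of p V "- q"] unfolding PolyIn_def by simp

lemma PolyIn_mult:
  assumes "p \<in> PolyIn V" "q \<in> PolyIn V"
  shows "p * (q::'a::comm_ring_1 mpoly) \<in> PolyIn V"
  unfolding PolyIn_def
proof (intro CollectI ballI)
  fix m assume "m \<in> Poly_Mapping.keys (p * q)"
  then obtain a b where "m = a + b" "a \<in> Poly_Mapping.keys p" "b \<in> Poly_Mapping.keys q"
    using keys_mult[of p q] by blast
  then show "Poly_Mapping.keys m \<subseteq> V"
    using assms keys_add[of a b] unfolding PolyIn_def by blast
qed

lemma PolyIn_sum: "(\<And>a. a \<in> A \<Longrightarrow> f a \<in> PolyIn V) \<Longrightarrow> sum f A \<in> PolyIn V"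
  by (induction A rule: infinite_finite_induct) (auto intro: PolyIn_add)

lemma PolyIn_power: "p \<in> PolyIn V \<Longrightarrow> (p::'a::comm_ring_1 mpoly) ^ k \<in> PolyIn V"
  by (induction k) (auto intro: PolyIn_mult)

definition eval_monom :: "(nat \<Rightarrow> 'b::comm_ring_1) \<Rightarrow> (nat \<Rightarrow>\<^sub>0 nat) \<Rightarrow> 'b" where
  "eval_monom \<sigma> m = (\<Prod>v\<in>Poly_Mapping.keys m. \<sigma> v ^ Poly_Mapping.lookup m v)"

definition eval_mpoly :: "('a::comm_ring_1 \<Rightarrow> 'b::comm_ring_1) \<Rightarrow> (nat \<Rightarrow> 'b) \<Rightarrow> 'a mpoly \<Rightarrow> 'b" where
  "eval_mpoly c \<sigma> p = (\<Sum>m\<in>Poly_Mapping.keys p. c (Poly_Mapping.lookup p m) * eval_monom \<sigma> m)"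

lemma eval_monom_superset:
  "finite A \<Longrightarrow> Poly_Mapping.keys m \<subseteq> A \<Longrightarrow>
    eval_monom \<sigma> m = (\<Prod>v\<in>A. \<sigma> v ^ Poly_Mapping.lookup m v)"
  unfolding eval_monom_def by (rule prod.mono_neutral_left) (auto simp: in_keys_iff)

lemma eval_monom_add: "eval_monom \<sigma> (m + m') = eval_monom \<sigma> m * eval_monom \<sigma> m'"
  using keys_add[of m m']
  by (simp add: eval_monom_superset[of "Poly_Mapping.keys m \<union> Poly_Mapping.keys m'"]
      lookup_add power_add prod.distrib)

lemma eval_monom_zero [simp]: "eval_monom \<sigma> 0 = 1"
  by (simp add: eval_monom_def)

lemma eval_monom_single: "eval_monom \<sigma> (Poly_Mapping.single v k) = \<sigma> v ^ k"
  by (simp add: eval_monom_superset[of "{v}"])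

lemma eval_monom_Var: "eval_monom (Var :: nat \<Rightarrow> 'a::comm_ring_1 mpoly) m = Poly_Mapping.single m 1"
proof -
  have "(\<Prod>v\<in>A. Poly_Mapping.single (Poly_Mapping.single v (Poly_Mapping.lookup m v)) (1::'a)) =
      Poly_Mapping.single (\<Sum>v\<in>A. Poly_Mapping.single v (Poly_Mapping.lookup m v)) 1" for A
    by (induction A rule: infinite_finite_induct) (auto simp: mult_single)
  then show ?thesis
    unfolding eval_monom_def Var_power by (simp flip: poly_mapping_sum_single)
qed

lemma eval_mpoly_superset:
  "ring_hom c \<Longrightarrow> finite A \<Longrightarrow> Poly_Mapping.keys p \<subseteq> A \<Longrightarrow>
    eval_mpoly c \<sigma> p = (\<Sum>m\<in>A. c (Poly_Mapping.lookup p m) * eval_monom \<sigma> m)"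
  unfolding eval_mpoly_def by (rule sum.mono_neutral_left) (auto simp: in_keys_iff ring_hom_zero)

lemma eval_mpoly_single:
  "ring_hom c \<Longrightarrow> eval_mpoly c \<sigma> (Poly_Mapping.single m a) = c a * eval_monom \<sigma> m"
  by (simp add: eval_mpoly_superset[of c "{m}"])

lemma eval_mpoly_Const: "ring_hom c \<Longrightarrow> eval_mpoly c \<sigma> (Const a) = c a"
  by (simp add: eval_mpoly_single)

lemma eval_mpoly_Var: "ring_hom c \<Longrightarrow> eval_mpoly c \<sigma> (Var v) = \<sigma> v"
  by (simp add: Var_def eval_mpoly_single ring_hom_one eval_monom_single)

lemma eval_mpoly_add: "ring_hom c \<Longrightarrow> eval_mpoly c \<sigma> (p + q) = eval_mpoly c \<sigma> p + eval_mpoly c \<sigma> q"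
  using keys_add[of p q]
  by (simp add: eval_mpoly_superset[of c "Poly_Mapping.keys p \<union> Poly_Mapping.keys q"]
      lookup_add ring_hom_add distrib_right sum.distrib)

lemma eval_mpoly_zero [simp]: "eval_mpoly c \<sigma> 0 = 0"
  by (simp add: eval_mpoly_def)

lemma eval_mpoly_sum: "ring_hom c \<Longrightarrow> eval_mpoly c \<sigma> (sum f A) = (\<Sum>a\<in>A. eval_mpoly c \<sigma> (f a))"
  by (induction A rule: infinite_finite_induct) (auto simp: eval_mpoly_add)

lemma eval_mpoly_mult:
  assumes "ring_hom c"
  shows "eval_mpoly c \<sigma> (p * q) = eval_mpoly c \<sigma> p * eval_mpoly c \<sigma> q"
proof -
  have "eval_mpoly c \<sigma> (p * q) = (\<Sum>m\<in>Poly_Mapping.keys p. \<Sum>m'\<in>Poly_Mapping.keys q.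
      c (Poly_Mapping.lookup p m) * eval_monom \<sigma> m * (c (Poly_Mapping.lookup q m') * eval_monom \<sigma> m'))"
    using assms by (simp add: mult_eq_sum_single[of p q] eval_mpoly_sum eval_mpoly_single
        ring_hom_mult eval_monom_add mult_ac)
  also have "\<dots> = eval_mpoly c \<sigma> p * eval_mpoly c \<sigma> q"
    by (simp add: eval_mpoly_def sum_product)
  finally show ?thesis .
qed

lemma ring_hom_eval_mpoly: "ring_hom c \<Longrightarrow> ring_hom (eval_mpoly c \<sigma>)"
  using eval_mpoly_Const[of c \<sigma> 1]
  by (simp add: ring_hom_def eval_mpoly_add eval_mpoly_mult ring_hom_one)

lemma eval_mpoly_Const_Var: "eval_mpoly Const Var (p :: 'a::comm_ring_1 mpoly) = p"
  by (simp add: eval_mpoly_def eval_monom_Var mult_single flip: poly_mapping_sum_single)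

lemma ring_hom_eval_mpoly_comp:
  "ring_hom \<phi> \<Longrightarrow> \<phi> (eval_mpoly c \<sigma> p) = eval_mpoly (\<lambda>a. \<phi> (c a)) (\<lambda>v. \<phi> (\<sigma> v)) p"
  by (simp add: eval_mpoly_def eval_monom_def ring_hom_sum ring_hom_mult ring_hom_prod ring_hom_power)

lemma eval_mpoly_cong:
  assumes "p \<in> PolyIn V" "\<And>v. v \<in> V \<Longrightarrow> \<sigma> v = \<tau> v"
  shows "eval_mpoly c \<sigma> p = eval_mpoly c \<tau> p"
  using assms unfolding eval_mpoly_def eval_monom_def PolyIn_def
  by (intro sum.cong arg_cong2[where f = "(*)"] prod.cong) (auto simp: subset_iff)

lemma eval_mpoly_closed:
  assumes "0 \<in> S" "1 \<in> S" "\<And>x y. x \<in> S \<Longrightarrow> y \<in> S \<Longrightarrow> x + y \<in> S"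
    "\<And>x y. x \<in> S \<Longrightarrow> y \<in> S \<Longrightarrow> x * y \<in> S"
    and "p \<in> PolyIn V" "\<And>a. c a \<in> S" "\<And>v. v \<in> V \<Longrightarrow> \<sigma> v \<in> S"
  shows "eval_mpoly c \<sigma> p \<in> S"
proof -
  have sum_in: "(\<And>a. a \<in> A \<Longrightarrow> f a \<in> S) \<Longrightarrow> sum f A \<in> S" for f and A :: "'c set"
    by (induction A rule: infinite_finite_induct) (auto simp: assms(1,3))
  have prod_in: "(\<And>a. a \<in> A \<Longrightarrow> f a \<in> S) \<Longrightarrow> prod f A \<in> S" for f and A :: "'c set"
    by (induction A rule: infinite_finite_induct) (auto simp: assms(2,4))
  have power_in: "x \<in> S \<Longrightarrow> x ^ k \<in> S" for x k
    by (induction k) (auto simp: assms(2,4))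
  show ?thesis
    using assms(5) unfolding eval_mpoly_def eval_monom_def PolyIn_def
    by (intro sum_in assms(4) prod_in power_in assms(6,7)) auto
qed

lemma ring_hom_eq_eval_mpoly:
  "ring_hom \<phi> \<Longrightarrow> \<phi> p = eval_mpoly (\<lambda>a. \<phi> (Const a)) (\<lambda>v. \<phi> (Var v)) p"
  using ring_hom_eval_mpoly_comp[of \<phi> Const Var p] by (simp only: eval_mpoly_Const_Var)

lemma ring_hom_mpoly_eqI:
  fixes \<phi> \<psi> :: "'a::comm_ring_1 mpoly \<Rightarrow> 'b::comm_ring_1"
  assumes "ring_hom \<phi>" "ring_hom \<psi>" "\<And>a. \<phi> (Const a) = \<psi> (Const a)"
    and "p \<in> PolyIn V" "\<And>v. v \<in> V \<Longrightarrow> \<phi> (Var v) = \<psi> (Var v)"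
  shows "\<phi> p = \<psi> p"
proof -
  have "eval_mpoly (\<lambda>a. \<phi> (Const a)) (\<lambda>v. \<phi> (Var v)) p =
      eval_mpoly (\<lambda>a. \<phi> (Const a)) (\<lambda>v. \<psi> (Var v)) p"
    using assms(4,5) by (rule eval_mpoly_cong)
  then show ?thesis
    using assms(1-3) by (simp add: ring_hom_eq_eval_mpoly[of \<phi> p] ring_hom_eq_eval_mpoly[of \<psi> p])
qed

lemma gen_idealI:
  "finite (I::nat set) \<Longrightarrow> (\<And>i. i \<in> I \<Longrightarrow> c i \<in> R) \<Longrightarrow> (\<And>i. i \<in> I \<Longrightarrow> g i \<in> G) \<Longrightarrow>
    x = (\<Sum>i\<in>I. c i * g i) \<Longrightarrow> x \<in> gen_ideal R G"
  unfolding gen_ideal_def by blast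

lemma gen_idealE:
  assumes "x \<in> gen_ideal R G"
  obtains I c g where "finite (I::nat set)" "\<And>i. i \<in> I \<Longrightarrow> c i \<in> R" "\<And>i. i \<in> I \<Longrightarrow> g i \<in> G"
    "x = (\<Sum>i\<in>I. c i * g i)"
  using assms unfolding gen_ideal_def by force

lemma gen_ideal_zero: "0 \<in> gen_ideal R G"
  by (rule gen_idealI[of "{}"]) simp_all

lemma gen_ideal_gen: "1 \<in> R \<Longrightarrow> g \<in> G \<Longrightarrow> g \<in> gen_ideal R G"
  by (rule gen_idealI[of "{0}" "\<lambda>_. 1" _ "\<lambda>_. g"]) simp_all

lemma gen_ideal_mono: "G \<subseteq> G' \<Longrightarrow> gen_ideal R G \<subseteq> gen_ideal R G'"
  unfolding gen_ideal_def by blast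

lemma gen_ideal_add:
  assumes "x \<in> gen_ideal R G" "y \<in> gen_ideal R G"
  shows "x + y \<in> gen_ideal R G"
proof -
  obtain I :: "nat set" and c g
    where I: "finite I" "\<And>i. i \<in> I \<Longrightarrow> c i \<in> R" "\<And>i. i \<in> I \<Longrightarrow> g i \<in> G"
    and x: "x = (\<Sum>i\<in>I. c i * g i)"
    using assms(1) by (elim gen_idealE) blast
  obtain I' :: "nat set" and c' g'
    where I': "finite I'" "\<And>i. i \<in> I' \<Longrightarrow> c' i \<in> R" "\<And>i. i \<in> I' \<Longrightarrow> g' i \<in> G"
    and y: "y = (\<Sum>i\<in>I'. c' i * g' i)"
    using assms(2) by (elim gen_idealE) blast
  let ?c = "\<lambda>i. if even i then c (i div 2) else c' (i div 2)"
  let ?g = "\<lambda>i. if even i then g (i div 2) else g' (i div 2)"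
  let ?I = "(\<lambda>i. 2 * i) ` I \<union> (\<lambda>i. Suc (2 * i)) ` I'"
  have "inj_on (\<lambda>i::nat. 2 * i) I" "inj_on (\<lambda>i::nat. Suc (2 * i)) I'"
    by (simp_all add: inj_on_def)
  then have "x + y = (\<Sum>i\<in>(\<lambda>i. 2 * i) ` I. ?c i * ?g i) + (\<Sum>i\<in>(\<lambda>i. Suc (2 * i)) ` I'. ?c i * ?g i)"
    using x y by (simp add: sum.reindex)
  also have "\<dots> = (\<Sum>i\<in>?I. ?c i * ?g i)"
    using I(1) I'(1) by (intro sum.union_disjoint[symmetric]) (auto, presburger)
  finally show ?thesis
    using I I' by (intro gen_idealI[of ?I ?c]) auto
qed

lemma gen_ideal_mult:
  assumes "\<And>a b. a \<in> R \<Longrightarrow> b \<in> R \<Longrightarrow> a * b \<in> R" "r \<in> R" "x \<in> gen_ideal R G"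
  shows "r * x \<in> gen_ideal R G"
proof -
  obtain I :: "nat set" and c g where "finite I" "\<And>i. i \<in> I \<Longrightarrow> c i \<in> R" "\<And>i. i \<in> I \<Longrightarrow> g i \<in> G"
    and "x = (\<Sum>i\<in>I. c i * g i)"
    using assms(3) by (elim gen_idealE) blast
  then show ?thesis
    using assms(1,2) by (intro gen_idealI[of I "\<lambda>i. r * c i" _ g]) (simp_all add: sum_distrib_left mult.assoc)
qed

lemma gen_ideal_PolyIn_mult:
  "r \<in> PolyIn V \<Longrightarrow> x \<in> gen_ideal (PolyIn V) G \<Longrightarrow> r * (x::'a::comm_ring_1 mpoly) \<in> gen_ideal (PolyIn V) G"
  by (rule gen_ideal_mult) (auto intro: PolyIn_mult)

lemma gen_ideal_least:
  assumes "G \<subseteq> J" "0 \<in> J" "\<And>x y. x \<in> J \<Longrightarrow> y \<in> J \<Longrightarrow> x + y \<in> J"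
    "\<And>r x. r \<in> R \<Longrightarrow> x \<in> J \<Longrightarrow> r * x \<in> J"
  shows "gen_ideal R G \<subseteq> J"
proof
  fix x assume "x \<in> gen_ideal R G"
  then obtain I :: "nat set" and c g
    where I: "finite I" "\<And>i. i \<in> I \<Longrightarrow> c i \<in> R" "\<And>i. i \<in> I \<Longrightarrow> g i \<in> G"
    and x: "x = (\<Sum>i\<in>I. c i * g i)"
    by (elim gen_idealE) blast
  have "(\<Sum>i\<in>A. c i * g i) \<in> J" if "A \<subseteq> I" for A
    using that by (induction A rule: infinite_finite_induct) (use assms I in \<open>auto intro!: assms(3,4)\<close>)
  then show "x \<in> J"
    using x by simp
qed

lemma gen_ideal_subset:
  assumes "R \<subseteq> R'" "G \<subseteq> gen_ideal R' G'" "\<And>a b. a \<in> R' \<Longrightarrow> b \<in> R' \<Longrightarrow> a * b \<in> R'"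
  shows "gen_ideal R G \<subseteq> gen_ideal R' G'"
  using assms by (intro gen_ideal_least) (auto intro: gen_ideal_zero gen_ideal_add gen_ideal_mult)

lemma gen_ideal_PolyIn_subset:
  "V \<subseteq> W \<Longrightarrow> G \<subseteq> gen_ideal (PolyIn W) G' \<Longrightarrow>
    gen_ideal (PolyIn V) G \<subseteq> gen_ideal (PolyIn W) (G' :: 'a::comm_ring_1 mpoly set)"
  by (rule gen_ideal_subset) (auto intro: PolyIn_mono PolyIn_mult)

lemma ring_hom_image_gen_ideal:
  assumes "ring_hom \<phi>" "\<phi> ` R \<subseteq> A" "\<phi> ` G \<subseteq> B" "0 \<in> B"
    "\<And>x y. x \<in> B \<Longrightarrow> y \<in> B \<Longrightarrow> x + y \<in> B" "\<And>a b. a \<in> A \<Longrightarrow> b \<in> B \<Longrightarrow> a * b \<in> B"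
  shows "\<phi> ` gen_ideal R G \<subseteq> B"
proof -
  have "gen_ideal R G \<subseteq> \<phi> -` B"
    using assms by (intro gen_ideal_least) (auto simp: ring_hom_zero ring_hom_add ring_hom_mult)
  then show ?thesis
    by blast
qed

section \<open>The embedding of K[X] into K(Y)[Z]\<close>

definition split_vars :: "nat \<Rightarrow> 'a::comm_ring_1 mpoly \<Rightarrow> 'a mpoly mpoly" where
  "split_vars d = eval_mpoly (\<lambda>a. Const (Const a)) (\<lambda>v. if v < d then Const (Var v) else Var v)"

lemma ring_hom_Const_Const: "ring_hom (\<lambda>a. Const (Const a))"
  by (rule ring_hom_comp[OF ring_hom_Const ring_hom_Const])

lemma ring_hom_split_vars: "ring_hom (split_vars d)"
  unfolding split_vars_def by (rule ring_hom_eval_mpoly[OF ring_hom_Const_Const])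

lemma split_vars_Const: "split_vars d (Const a) = Const (Const a)"
  unfolding split_vars_def by (rule eval_mpoly_Const[OF ring_hom_Const_Const])

lemma split_vars_Var: "split_vars d (Var v) = (if v < d then Const (Var v) else Var v)"
  unfolding split_vars_def by (rule eval_mpoly_Var[OF ring_hom_Const_Const])

lemma eval_monom_split_vars:
  "eval_monom (\<lambda>v. if v < d then Const (Var v) else Var v) m =
    Poly_Mapping.single (mon_hi d m) (Poly_Mapping.single (mon_lo d m) (1::'a::comm_ring_1))"
proof -
  define hi lo :: "nat \<Rightarrow> nat \<Rightarrow> nat \<Rightarrow>\<^sub>0 nat"
    where "hi v k = Poly_Mapping.single v (if v < d then 0 else k)"
    and "lo v k = Poly_Mapping.single v (if v < d then k else 0)" for v k
  have power: "(if v < d then Const (Var v) else Var v) ^ k =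
      Poly_Mapping.single (hi v k) (Poly_Mapping.single (lo v k) (1::'a))" for v k
    by (simp add: hi_def lo_def Var_power ring_hom_power[OF ring_hom_Const, symmetric])
  have prod: "(\<Prod>v\<in>A. Poly_Mapping.single (h v) (Poly_Mapping.single (l v) (1::'a))) =
      Poly_Mapping.single (\<Sum>v\<in>A. h v) (Poly_Mapping.single (\<Sum>v\<in>A. l v) 1)" for A h l
    by (induction A rule: infinite_finite_induct) (simp_all add: mult_single)
  have "(\<Sum>v\<in>Poly_Mapping.keys m. hi v (Poly_Mapping.lookup m v)) = mon_hi d m"
    "(\<Sum>v\<in>Poly_Mapping.keys m. lo v (Poly_Mapping.lookup m v)) = mon_lo d m"
    by (auto intro!: poly_mapping_eqI simp: lookup_sum lookup_single when_def hi_def lo_def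
        mon_hi_def mon_lo_def lookup_mapp in_keys_iff)
  then show ?thesis
    unfolding eval_monom_def power prod by simp
qed

lemma split_vars_eq:
  "split_vars d p = (\<Sum>m\<in>Poly_Mapping.keys p.
     Poly_Mapping.single (mon_hi d m) (Poly_Mapping.single (mon_lo d m) (Poly_Mapping.lookup p m)))"
  by (simp add: split_vars_def eval_mpoly_def eval_monom_split_vars mult_single)

definition fract_coeffs :: "'a::idom mpoly \<Rightarrow> 'a fract mpoly" where
  "fract_coeffs = eval_mpoly (\<lambda>a. Const (Fract a 1)) Var"

lemma ring_hom_Const_Fract_1: "ring_hom (\<lambda>a::'a::idom. Const (Fract a 1))"
  by (rule ring_hom_comp[OF ring_hom_Const ring_hom_Fract_1])

lemma ring_hom_fract_coeffs: "ring_hom fract_coeffs"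
  unfolding fract_coeffs_def by (rule ring_hom_eval_mpoly[OF ring_hom_Const_Fract_1])

lemma fract_coeffs_single: "fract_coeffs (Poly_Mapping.single m a) = Poly_Mapping.single m (Fract a 1)"
  unfolding fract_coeffs_def
  by (simp add: eval_mpoly_single ring_hom_Const_Fract_1 eval_monom_Var mult_single)

lemma lookup_fract_coeffs: "Poly_Mapping.lookup (fract_coeffs q) m = Fract (Poly_Mapping.lookup q m) 1"
  by (subst poly_mapping_sum_single[of q])
    (simp add: ring_hom_sum[OF ring_hom_fract_coeffs] fract_coeffs_single lookup_sum lookup_single
      when_def in_keys_iff Fract_1_eq_0_iff)

lemma fract_coeffs_inj: "fract_coeffs p = fract_coeffs q \<Longrightarrow> p = q"
  by (rule poly_mapping_eqI) (metis lookup_fract_coeffs Fract_1_eq_iff)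

lemma fract_coeffs_PolyIn: "q \<in> PolyIn V \<Longrightarrow> fract_coeffs q \<in> PolyIn V"
  by (simp add: PolyIn_def in_keys_iff lookup_fract_coeffs Fract_1_eq_0_iff)

lemma emb_eq_fract_coeffs_split_vars: "emb d p = fract_coeffs (split_vars d p)"
  by (simp add: emb_def split_vars_eq ring_hom_sum[OF ring_hom_fract_coeffs] fract_coeffs_single)

lemma ring_hom_emb: "ring_hom (emb d)"
  unfolding emb_eq_fract_coeffs_split_vars by (rule ring_hom_comp[OF ring_hom_fract_coeffs ring_hom_split_vars])

lemma emb_PolyIn: "p \<in> PolyIn {..<n} \<Longrightarrow> emb d p \<in> PolyIn {d..<n}"
  unfolding emb_eq_fract_coeffs_split_vars split_vars_def
  by (intro fract_coeffs_PolyIn eval_mpoly_closed[where S = "PolyIn {d..<n}"])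
    (auto intro: PolyIn_add PolyIn_mult PolyIn_Var)

lemma emb_eq_Const_Fract: "g \<in> PolyIn {..<d} \<Longrightarrow> emb d g = Const (Fract g 1)"
  by (rule ring_hom_mpoly_eqI[where \<phi> = "emb d" and \<psi> = "\<lambda>g. Const (Fract g 1)" and V = "{..<d}"])
    (simp_all add: ring_hom_emb ring_hom_Const_Fract_1 emb_eq_fract_coeffs_split_vars
      split_vars_Const split_vars_Var fract_coeffs_single)

definition swap_vars :: "nat \<Rightarrow> 'a::comm_ring_1 mpoly mpoly \<Rightarrow> 'a mpoly mpoly" where
  "swap_vars d = eval_mpoly (split_vars d) (\<lambda>v. Const (Var v))"

lemma ring_hom_swap_vars: "ring_hom (swap_vars d)"
  unfolding swap_vars_def by (rule ring_hom_eval_mpoly[OF ring_hom_split_vars])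

lemma swap_vars_Const: "swap_vars d (Const a) = split_vars d a"
  unfolding swap_vars_def by (rule eval_mpoly_Const[OF ring_hom_split_vars])

lemma swap_vars_Var: "swap_vars d (Var v) = Const (Var v)"
  unfolding swap_vars_def by (rule eval_mpoly_Var[OF ring_hom_split_vars])

lemma swap_vars_split_vars: "swap_vars d (split_vars d p) = Const p"
  by (rule ring_hom_mpoly_eqI[where \<phi> = "\<lambda>p. swap_vars d (split_vars d p)" and \<psi> = Const and V = UNIV])
    (simp_all add: ring_hom_comp[OF ring_hom_swap_vars ring_hom_split_vars] ring_hom_Const
      split_vars_Const split_vars_Var swap_vars_Const swap_vars_Var)

lemma split_vars_eq_0_iff: "split_vars d p = 0 \<longleftrightarrow> p = 0"
  by (metis swap_vars_split_vars ring_hom_zero[OF ring_hom_split_vars] single_zero inj_single injD)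

lemma emb_eq_0_iff: "emb d p = 0 \<longleftrightarrow> p = 0"
  by (metis emb_eq_fract_coeffs_split_vars split_vars_eq_0_iff fract_coeffs_inj ring_hom_zero[OF ring_hom_fract_coeffs])

definition coeffs_in :: "nat set \<Rightarrow> 'a::comm_ring_1 mpoly mpoly \<Rightarrow> bool" where
  "coeffs_in V q \<longleftrightarrow> (\<forall>m. Poly_Mapping.lookup q m \<in> PolyIn V)"

lemma coeffs_in_Const: "a \<in> PolyIn V \<Longrightarrow> coeffs_in V (Const a)"
  by (simp add: coeffs_in_def lookup_single when_def)

lemma coeffs_in_Var: "coeffs_in V (Var v)"
  by (simp add: coeffs_in_def Var_def lookup_single when_def)

lemma coeffs_in_mono: "coeffs_in V q \<Longrightarrow> V \<subseteq> W \<Longrightarrow> coeffs_in W q"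
  unfolding coeffs_in_def using PolyIn_mono by blast

lemma coeffs_in_eval_mpoly:
  assumes "p \<in> PolyIn W" "\<And>a. coeffs_in V (c a)" "\<And>v. v \<in> W \<Longrightarrow> coeffs_in V (\<sigma> v)"
  shows "coeffs_in V (eval_mpoly c \<sigma> p)"
proof -
  have "coeffs_in V (q * q')" if "coeffs_in V q" "coeffs_in V q'" for q q'
    using that unfolding coeffs_in_def mult_eq_sum_single[of q q'] lookup_sum
    by (auto intro!: PolyIn_sum simp: lookup_single when_def PolyIn_mult)
  moreover have "coeffs_in V (q + q')" if "coeffs_in V q" "coeffs_in V q'" for q q'
    using that by (simp add: coeffs_in_def lookup_add PolyIn_add)
  ultimately have "eval_mpoly c \<sigma> p \<in> Collect (coeffs_in V)"
    using assms coeffs_in_Const[of 0 V] coeffs_in_Const[of 1 V]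
    by (intro eval_mpoly_closed[where S = "Collect (coeffs_in V)"]) auto
  then show ?thesis
    by simp
qed

lemma coeffs_in_split_vars: "coeffs_in {..<d} (split_vars d p)"
  unfolding split_vars_def
  by (rule coeffs_in_eval_mpoly[where W = UNIV]) (simp_all add: coeffs_in_Const coeffs_in_Var PolyIn_Var)

lemma coeffs_in_swap_vars: "d \<le> n \<Longrightarrow> q \<in> PolyIn {..<n} \<Longrightarrow> coeffs_in {..<n} (swap_vars d q)"
  unfolding swap_vars_def
  by (rule coeffs_in_eval_mpoly) (auto intro: coeffs_in_mono[OF coeffs_in_split_vars] coeffs_in_Const PolyIn_Var)

section \<open>Clearing denominators\<close>

lemma common_denominator_mpoly:
  fixes C :: "'a::idom fract mpoly set"
  assumes "finite C" "C \<subseteq> PolyIn V"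
  obtains D where "D \<noteq> 0" "\<And>c. c \<in> C \<Longrightarrow> \<exists>q \<in> PolyIn V. fract_coeffs q = Const (Fract D 1) * c"
proof -
  let ?X = "\<Union>c\<in>C. Poly_Mapping.lookup c ` Poly_Mapping.keys c"
  obtain D where "D \<noteq> 0" "\<forall>x\<in>?X. \<exists>a. Fract D 1 * x = Fract a 1"
    using common_denominator[of ?X] assms(1) by auto
  then obtain num where num: "\<And>x. x \<in> ?X \<Longrightarrow> Fract D 1 * x = Fract (num x) 1"
    by metis
  have "\<exists>q \<in> PolyIn V. fract_coeffs q = Const (Fract D 1) * c" if "c \<in> C" for c
  proof
    let ?q = "\<Sum>m\<in>Poly_Mapping.keys c. Poly_Mapping.single m (num (Poly_Mapping.lookup c m))"
    show "?q \<in> PolyIn V"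
      using assms(2) that by (intro PolyIn_sum PolyIn_single) (auto simp: PolyIn_def)
    have "fract_coeffs ?q = (\<Sum>m\<in>Poly_Mapping.keys c. fract_coeffs (Poly_Mapping.single m (num (Poly_Mapping.lookup c m))))"
      by (rule ring_hom_sum[OF ring_hom_fract_coeffs])
    also have "\<dots> = (\<Sum>m\<in>Poly_Mapping.keys c. Const (Fract D 1) * Poly_Mapping.single m (Poly_Mapping.lookup c m))"
    proof (rule sum.cong)
      fix m assume "m \<in> Poly_Mapping.keys c"
      then have "Poly_Mapping.lookup c m \<in> ?X"
        using that by blast
      then show "fract_coeffs (Poly_Mapping.single m (num (Poly_Mapping.lookup c m))) =
          Const (Fract D 1) * Poly_Mapping.single m (Poly_Mapping.lookup c m)"
        by (simp add: fract_coeffs_single mult_single num)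
    qed simp
    also have "\<dots> = Const (Fract D 1) * c"
      by (simp flip: sum_distrib_left poly_mapping_sum_single)
    finally show "fract_coeffs ?q = Const (Fract D 1) * c" .
  qed
  with \<open>D \<noteq> 0\<close> show ?thesis
    using that by blast
qed

lemma emb_relation_imp_split_vars_relation:
  fixes p :: "'a::idom mpoly"
  assumes "finite J" "\<And>j. j \<in> J \<Longrightarrow> c j \<in> PolyIn V"
    and rel: "emb d p = (\<Sum>j\<in>J. c j * emb d (u j))"
  obtains D c' where "D \<noteq> 0" "\<And>j. j \<in> J \<Longrightarrow> c' j \<in> PolyIn V"
    "Const D * split_vars d p = (\<Sum>j\<in>J. c' j * split_vars d (u j))"
proof -
  obtain D where "D \<noteq> 0" "\<And>x. x \<in> c ` J \<Longrightarrow> \<exists>q \<in> PolyIn V. fract_coeffs q = Const (Fract D 1) * x"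
    by (rule common_denominator_mpoly[of "c ` J" V]) (use assms(1,2) in auto)
  then have "\<forall>j\<in>J. \<exists>q. q \<in> PolyIn V \<and> fract_coeffs q = Const (Fract D 1) * c j"
    by blast
  then obtain c' where c': "\<And>j. j \<in> J \<Longrightarrow> c' j \<in> PolyIn V"
    "\<And>j. j \<in> J \<Longrightarrow> fract_coeffs (c' j) = Const (Fract D 1) * c j"
    by metis
  have "fract_coeffs (Const D * split_vars d p) = Const (Fract D 1) * emb d p"
    by (simp add: ring_hom_mult[OF ring_hom_fract_coeffs] fract_coeffs_single emb_eq_fract_coeffs_split_vars)
  also have "\<dots> = (\<Sum>j\<in>J. (Const (Fract D 1) * c j) * emb d (u j))"
    by (simp add: rel sum_distrib_left mult.assoc)
  also have "\<dots> = fract_coeffs (\<Sum>j\<in>J. c' j * split_vars d (u j))"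
    by (simp add: c'(2) emb_eq_fract_coeffs_split_vars ring_hom_sum[OF ring_hom_fract_coeffs]
        ring_hom_mult[OF ring_hom_fract_coeffs])
  finally have "Const D * split_vars d p = (\<Sum>j\<in>J. c' j * split_vars d (u j))"
    by (rule fract_coeffs_inj)
  with \<open>D \<noteq> 0\<close> c'(1) show thesis
    by (rule that)
qed

lemma split_vars_relation_imp_multiple:
  fixes p D :: "'a::idom mpoly"
  assumes "d \<le> n" "D \<noteq> 0" "\<And>j. j \<in> J \<Longrightarrow> c j \<in> PolyIn {..<n}"
    and rel: "Const D * split_vars d p = (\<Sum>j\<in>J. c j * split_vars d (u j))"
  obtains g e where "g \<in> PolyIn {..<d}" "g \<noteq> 0" "\<And>j. j \<in> J \<Longrightarrow> e j \<in> PolyIn {..<n}"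
    "g * p = (\<Sum>j\<in>J. e j * u j)"
proof -
  have swapped: "split_vars d D * Const p = (\<Sum>j\<in>J. swap_vars d (c j) * Const (u j))"
    using arg_cong[OF rel, of "swap_vars d"]
    by (simp add: ring_hom_mult[OF ring_hom_swap_vars] ring_hom_sum[OF ring_hom_swap_vars]
        swap_vars_Const swap_vars_split_vars)
  obtain w where w: "w \<in> Poly_Mapping.keys (split_vars d D)"
    using assms(2) split_vars_eq_0_iff by (metis all_not_in_conv keys_eq_empty)
  define g e where "g = Poly_Mapping.lookup (split_vars d D) w"
    and "e j = Poly_Mapping.lookup (swap_vars d (c j)) w" for j
  show thesis
  proof
    show "g \<in> PolyIn {..<d}"
      using coeffs_in_split_vars unfolding g_def coeffs_in_def by blast
    show "g \<noteq> 0"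
      using w by (simp add: g_def in_keys_iff)
    show "e j \<in> PolyIn {..<n}" if "j \<in> J" for j
      using coeffs_in_swap_vars[OF assms(1) assms(3)[OF that]] unfolding e_def coeffs_in_def by blast
    show "g * p = (\<Sum>j\<in>J. e j * u j)"
      using arg_cong[OF swapped, of "\<lambda>q. Poly_Mapping.lookup q w"]
      by (simp add: g_def e_def lookup_mult_Const lookup_sum)
  qed
qed

lemma emb_power_in_ideal_imp_multiple:
  fixes f :: "'a::idom mpoly"
  assumes "d \<le> n" "emb d f ^ k \<in> gen_ideal (PolyIn {d..<n}) (emb d ` H)"
  obtains g where "g \<in> PolyIn {..<d}" "g \<noteq> 0" "g * f ^ k \<in> gen_ideal (PolyIn {..<n}) H"
proof -
  obtain J :: "nat set" and c h where J: "finite J" and c: "\<And>j. j \<in> J \<Longrightarrow> c j \<in> PolyIn {d..<n}"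
    and h: "\<And>j. j \<in> J \<Longrightarrow> h j \<in> emb d ` H" and rel: "emb d f ^ k = (\<Sum>j\<in>J. c j * h j)"
    using assms(2) by (elim gen_idealE) blast
  have "\<forall>j\<in>J. \<exists>x. x \<in> H \<and> h j = emb d x"
    using h by blast
  then obtain u where u: "\<And>j. j \<in> J \<Longrightarrow> u j \<in> H" "\<And>j. j \<in> J \<Longrightarrow> h j = emb d (u j)"
    by metis
  have "emb d (f ^ k) = (\<Sum>j\<in>J. c j * emb d (u j))"
    using rel u(2) by (simp add: ring_hom_power[OF ring_hom_emb])
  then obtain D c' where D: "D \<noteq> 0" and c': "\<And>j. j \<in> J \<Longrightarrow> c' j \<in> PolyIn {d..<n}"
    and rel': "Const D * split_vars d (f ^ k) = (\<Sum>j\<in>J. c' j * split_vars d (u j))"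
    using emb_relation_imp_split_vars_relation[where c = c and V = "{d..<n}", OF J c] by blast
  have "c' j \<in> PolyIn {..<n}" if "j \<in> J" for j
    by (rule PolyIn_mono[OF c'[OF that]]) auto
  then obtain g e where "g \<in> PolyIn {..<d}" "g \<noteq> 0" "\<And>j. j \<in> J \<Longrightarrow> e j \<in> PolyIn {..<n}"
    "g * f ^ k = (\<Sum>j\<in>J. e j * u j)"
    using split_vars_relation_imp_multiple[OF assms(1) D _ rel'] by blast
  with J u(1) show thesis
    by (intro that[of g]) (auto intro: gen_idealI[of J e _ u])
qed

lemma rabinowitsch_identity:
  fixes g f t :: "'a::comm_ring_1"
  shows "g = t ^ k * (g * f ^ k) - g * (\<Sum>i<k. (f * t) ^ i) * (f * t - 1)"
proof -
  have geometric: "(f * t - 1) * (\<Sum>i<k. (f * t) ^ i) = (f * t) ^ k - 1"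
    by (simp add: power_diff_1_eq)
  have "t ^ k * (g * f ^ k) - g * (\<Sum>i<k. (f * t) ^ i) * (f * t - 1) =
      g * (f * t) ^ k - g * ((f * t - 1) * (\<Sum>i<k. (f * t) ^ i))"
    by (simp add: power_mult_distrib algebra_simps)
  also have "\<dots> = g"
    by (simp add: geometric right_diff_distrib)
  finally show ?thesis ..
qed

lemma in_gen_ideal_cancel_power:
  assumes "t \<in> V" "g \<in> PolyIn V" "f \<in> PolyIn V" "f * Var t - 1 \<in> G"
    and "g * f ^ k \<in> gen_ideal (PolyIn V) G"
  shows "g \<in> gen_ideal (PolyIn V) G"
proof -
  let ?s = "\<Sum>i<k. (f * Var t) ^ i"
  have "Var t ^ k * (g * f ^ k) \<in> gen_ideal (PolyIn V) G"
    by (rule gen_ideal_PolyIn_mult[OF PolyIn_power[OF PolyIn_Var[OF assms(1)]] assms(5)])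
  moreover have "(0 - g * ?s) * (f * Var t - 1) \<in> gen_ideal (PolyIn V) G"
    using assms(1-4)
    by (intro gen_ideal_PolyIn_mult gen_ideal_gen PolyIn_diff PolyIn_mult PolyIn_sum PolyIn_power PolyIn_Var) auto
  ultimately have "Var t ^ k * (g * f ^ k) + (0 - g * ?s) * (f * Var t - 1) \<in> gen_ideal (PolyIn V) G"
    by (rule gen_ideal_add)
  then show ?thesis
    by (subst rabinowitsch_identity[of g "Var t" k f]) simp
qed

lemma emb_power_in_ideal_imp_inter_nonzero:
  fixes f :: "'a::idom mpoly"
  assumes "d \<le> n" "f \<in> PolyIn {..<n}"
    and "emb d f ^ k \<in> gen_ideal (PolyIn {d..<n}) (emb d ` gen_ideal (PolyIn {..<n}) G)"
  shows "gen_ideal (PolyIn {..n}) (G \<union> {f * Var n - 1}) \<inter> PolyIn {..<d} \<noteq> {0}"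
proof -
  let ?I = "gen_ideal (PolyIn {..n}) (G \<union> {f * Var n - 1})"
  obtain g where g: "g \<in> PolyIn {..<d}" "g \<noteq> 0"
    "g * f ^ k \<in> gen_ideal (PolyIn {..<n}) (gen_ideal (PolyIn {..<n}) G)"
    using emb_power_in_ideal_imp_multiple[OF assms(1,3)] by blast
  have "gen_ideal (PolyIn {..<n}) G \<subseteq> ?I"
    by (rule gen_ideal_PolyIn_subset) (auto intro: gen_ideal_gen)
  then have "gen_ideal (PolyIn {..<n}) (gen_ideal (PolyIn {..<n}) G) \<subseteq> ?I"
    by (rule gen_ideal_PolyIn_subset[rotated]) auto
  with g(3) have "g * f ^ k \<in> ?I"
    by blast
  moreover have "g \<in> PolyIn {..n}" "f \<in> PolyIn {..n}"
    using assms(1) by (auto intro: PolyIn_mono[OF g(1)] PolyIn_mono[OF assms(2)])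
  ultimately have "g \<in> ?I"
    using in_gen_ideal_cancel_power[of n "{..n}" g f] by simp
  with g(1,2) show ?thesis
    by blast
qed

section \<open>The substitution t := 1/f\<close>

definition frac_over_powers :: "'a::idom \<Rightarrow> 'a set \<Rightarrow> 'a fract set" where
  "frac_over_powers e A = {Fract a (e ^ N) | a N. a \<in> A}"

lemma Fract_1_in_frac_over_powers: "a \<in> A \<Longrightarrow> Fract a 1 \<in> frac_over_powers e A"
  unfolding frac_over_powers_def by (intro CollectI exI[of _ a] exI[of _ 0]) simp

lemma inverse_base_in_frac_over_powers: "1 \<in> A \<Longrightarrow> Fract 1 e \<in> frac_over_powers e A"
  unfolding frac_over_powers_def by (intro CollectI exI[of _ 1] exI[of _ 1]) simp

lemma frac_over_powers_add:
  assumes "e \<noteq> 0" "x \<in> frac_over_powers e A" "y \<in> frac_over_powers e A"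
    "\<And>a b. a \<in> A \<Longrightarrow> b \<in> A \<Longrightarrow> a + b \<in> A" "\<And>a k. a \<in> A \<Longrightarrow> e ^ k * a \<in> A"
  shows "x + y \<in> frac_over_powers e A"
proof -
  obtain a N b M where "a \<in> A" "b \<in> A" "x = Fract a (e ^ N)" "y = Fract b (e ^ M)"
    using assms(2,3) unfolding frac_over_powers_def by blast
  moreover have "Fract a (e ^ N) + Fract b (e ^ M) = Fract (e ^ M * a + e ^ N * b) (e ^ (N + M))"
    using assms(1) by (simp add: power_add mult.commute)
  ultimately show ?thesis
    using assms(4,5) unfolding frac_over_powers_def by blast
qed

lemma frac_over_powers_mult:
  assumes "x \<in> frac_over_powers e A" "y \<in> frac_over_powers e B"
    "\<And>a b. a \<in> A \<Longrightarrow> b \<in> B \<Longrightarrow> a * b \<in> B"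
  shows "x * y \<in> frac_over_powers e B"
proof -
  obtain a N b M where "a \<in> A" "b \<in> B" "x = Fract a (e ^ N)" "y = Fract b (e ^ M)"
    using assms(1,2) unfolding frac_over_powers_def by blast
  moreover have "Fract a (e ^ N) * Fract b (e ^ M) = Fract (a * b) (e ^ (N + M))"
    by (simp add: power_add)
  ultimately show ?thesis
    using assms(3) unfolding frac_over_powers_def by blast
qed

lemma Fract_1_in_frac_over_powersE:
  assumes "e \<noteq> 0" "Fract b 1 \<in> frac_over_powers e A"
  obtains N where "b * e ^ N \<in> A"
proof -
  obtain a N where "a \<in> A" "Fract b 1 = Fract a (e ^ N)"
    using assms(2) unfolding frac_over_powers_def by blast
  with assms(1) show thesis
    by (intro that[of N]) (simp add: eq_fract)
qed

definition rabinowitsch_subst ::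
  "nat \<Rightarrow> nat \<Rightarrow> 'a::idom mpoly \<Rightarrow> 'a mpoly \<Rightarrow> 'a mpoly fract mpoly fract" where
  "rabinowitsch_subst d n f = eval_mpoly (\<lambda>a. Fract (emb d (Const a)) 1)
     (\<lambda>v. if v = n then Fract 1 (emb d f) else Fract (emb d (Var v)) 1)"

lemma ring_hom_Fract_emb: "ring_hom (\<lambda>p. Fract (emb d p) 1)"
  by (rule ring_hom_comp[OF ring_hom_Fract_1 ring_hom_emb])

lemma ring_hom_rabinowitsch_subst: "ring_hom (rabinowitsch_subst d n f)"
  unfolding rabinowitsch_subst_def
  by (rule ring_hom_eval_mpoly[OF ring_hom_comp[OF ring_hom_Fract_emb ring_hom_Const]])

lemma rabinowitsch_subst_Const: "rabinowitsch_subst d n f (Const a) = Fract (emb d (Const a)) 1"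
  unfolding rabinowitsch_subst_def
  by (rule eval_mpoly_Const[OF ring_hom_comp[OF ring_hom_Fract_emb ring_hom_Const]])

lemma rabinowitsch_subst_Var:
  "rabinowitsch_subst d n f (Var v) = (if v = n then Fract 1 (emb d f) else Fract (emb d (Var v)) 1)"
  unfolding rabinowitsch_subst_def
  by (rule eval_mpoly_Var[OF ring_hom_comp[OF ring_hom_Fract_emb ring_hom_Const]])

lemma rabinowitsch_subst_eq_emb:
  "p \<in> PolyIn {..<n} \<Longrightarrow> rabinowitsch_subst d n f p = Fract (emb d p) 1"
  by (rule ring_hom_mpoly_eqI[where \<phi> = "rabinowitsch_subst d n f" and V = "{..<n}"])
    (simp_all add: ring_hom_rabinowitsch_subst ring_hom_Fract_emb rabinowitsch_subst_Const
      rabinowitsch_subst_Var)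

lemma rabinowitsch_subst_vanishes:
  assumes "f \<in> PolyIn {..<n}" "f \<noteq> 0"
  shows "rabinowitsch_subst d n f (f * Var n - 1) = 0"
proof -
  have "Fract (emb d f) (emb d f) = 1"
    using assms(2) by (simp add: Fract_self emb_eq_0_iff)
  then show ?thesis
    using assms(1) by (simp add: ring_hom_diff ring_hom_mult ring_hom_one ring_hom_rabinowitsch_subst
        rabinowitsch_subst_eq_emb rabinowitsch_subst_Var)
qed

lemma rabinowitsch_subst_in_frac_over_powers:
  assumes "f \<in> PolyIn {..<n}" "f \<noteq> 0" "p \<in> PolyIn {..n}"
  shows "rabinowitsch_subst d n f p \<in> frac_over_powers (emb d f) (PolyIn {d..<n})"
    (is "_ \<in> ?F")
  unfolding rabinowitsch_subst_def
proof (rule eval_mpoly_closed[OF _ _ _ _ assms(3)])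
  have "emb d f \<noteq> 0" "emb d f \<in> PolyIn {d..<n}"
    using assms(1,2) by (simp_all add: emb_eq_0_iff emb_PolyIn)
  then show "x + y \<in> ?F" if "x \<in> ?F" "y \<in> ?F" for x y
    using that by (intro frac_over_powers_add) (auto intro: PolyIn_add PolyIn_mult PolyIn_power)
  show "x * y \<in> ?F" if "x \<in> ?F" "y \<in> ?F" for x y
    using that by (rule frac_over_powers_mult) (rule PolyIn_mult)
  show "0 \<in> ?F"
    using Fract_1_in_frac_over_powers[OF PolyIn_zero] by (simp add: fract_collapse)
  show "1 \<in> ?F"
    using Fract_1_in_frac_over_powers[OF PolyIn_one] by (simp add: fract_collapse)
  show "Fract (emb d (Const a)) 1 \<in> ?F" for a
    by (intro Fract_1_in_frac_over_powers emb_PolyIn PolyIn_Const)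
  show "(if v = n then Fract 1 (emb d f) else Fract (emb d (Var v)) 1) \<in> ?F"
    if "v \<in> {..n}" for v
  proof (cases "v = n")
    case False
    with that have "(Var v :: 'a mpoly) \<in> PolyIn {..<n}"
      by (intro PolyIn_Var) auto
    with False show ?thesis
      by (simp add: Fract_1_in_frac_over_powers emb_PolyIn)
  qed (simp add: inverse_base_in_frac_over_powers)
qed

lemma rabinowitsch_subst_image_gen_ideal:
  assumes "G \<subseteq> PolyIn {..<n}" "f \<in> PolyIn {..<n}" "f \<noteq> 0"
  shows "rabinowitsch_subst d n f ` gen_ideal (PolyIn {..n}) (G \<union> {f * Var n - 1})
    \<subseteq> frac_over_powers (emb d f) (gen_ideal (PolyIn {d..<n}) (emb d ` G))"
    (is "_ \<subseteq> frac_over_powers ?e ?J")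
proof (rule ring_hom_image_gen_ideal[OF ring_hom_rabinowitsch_subst])
  show "rabinowitsch_subst d n f ` PolyIn {..n} \<subseteq> frac_over_powers ?e (PolyIn {d..<n})"
    using assms(2,3) by (auto intro: rabinowitsch_subst_in_frac_over_powers)
  show zero: "0 \<in> frac_over_powers ?e ?J"
    using Fract_1_in_frac_over_powers[OF gen_ideal_zero] by (simp add: fract_collapse)
  have "Fract (emb d h) 1 \<in> frac_over_powers ?e ?J" if "h \<in> G" for h
    using that by (intro Fract_1_in_frac_over_powers gen_ideal_gen) simp_all
  with zero show "rabinowitsch_subst d n f ` (G \<union> {f * Var n - 1}) \<subseteq> frac_over_powers ?e ?J"
    using assms by (auto simp: rabinowitsch_subst_eq_emb rabinowitsch_subst_vanishes)
  have "?e \<noteq> 0" "?e \<in> PolyIn {d..<n}"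
    using assms(2,3) by (simp_all add: emb_eq_0_iff emb_PolyIn)
  then show "x + y \<in> frac_over_powers ?e ?J"
    if "x \<in> frac_over_powers ?e ?J" "y \<in> frac_over_powers ?e ?J" for x y
    using that by (intro frac_over_powers_add) (auto intro: gen_ideal_add gen_ideal_PolyIn_mult PolyIn_power)
  show "x * y \<in> frac_over_powers ?e ?J"
    if "x \<in> frac_over_powers ?e (PolyIn {d..<n})" "y \<in> frac_over_powers ?e ?J" for x y
    using that by (rule frac_over_powers_mult) (rule gen_ideal_PolyIn_mult)
qed

lemma inter_nonzero_imp_emb_power_in_ideal:
  fixes f g :: "'a::idom mpoly"
  assumes "d \<le> n" "G \<subseteq> PolyIn {..<n}" "f \<in> PolyIn {..<n}"
    and "g \<in> gen_ideal (PolyIn {..n}) (G \<union> {f * Var n - 1})" "g \<in> PolyIn {..<d}" "g \<noteq> 0"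
  obtains N where "emb d f ^ N \<in> gen_ideal (PolyIn {d..<n}) (emb d ` G)"
proof (cases "f = 0")
  case True
  then show thesis
    using that[of 1] by (simp add: ring_hom_zero[OF ring_hom_emb] gen_ideal_zero)
next
  case False
  let ?J = "gen_ideal (PolyIn {d..<n}) (emb d ` G)"
  have e: "emb d f \<noteq> 0"
    using False by (simp add: emb_eq_0_iff)
  have "g \<in> PolyIn {..<n}"
    by (rule PolyIn_mono[OF assms(5)]) (use assms(1) in auto)
  then have "Fract (emb d g) 1 \<in> frac_over_powers (emb d f) ?J"
    using rabinowitsch_subst_image_gen_ideal[OF assms(2,3) False] assms(4)
    by (force simp: rabinowitsch_subst_eq_emb)
  then obtain N where "emb d g * emb d f ^ N \<in> ?J"
    using Fract_1_in_frac_over_powersE[OF e] by blast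
  then have "Const (inverse (Fract g 1)) * (emb d g * emb d f ^ N) \<in> ?J"
    by (rule gen_ideal_PolyIn_mult[OF PolyIn_Const])
  moreover have "Const (inverse (Fract g 1)) * emb d g = 1"
    using assms(5,6) by (simp add: emb_eq_Const_Fract mult_single Fract_self)
  ultimately show thesis
    by (intro that[of N]) (simp add: mult.assoc[symmetric])
qed

theorem lemma2:
  fixes n d :: nat and hs :: "('a::field) mpoly list" and f :: "'a mpoly"
  assumes "d \<le> n"
    and "set hs \<subseteq> PolyIn {..<n}"
    and "f \<in> PolyIn {..<n}"
    and indep: "gen_ideal (PolyIn {..<n}) (set hs) \<inter> PolyIn {..<d} = {0}"
    and maxsize: "\<forall>W \<subseteq> {..<n}. card W > d \<longrightarrow>
                    gen_ideal (PolyIn {..<n}) (set hs) \<inter> PolyIn W \<noteq> {0}"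
  shows "emb d f \<in> radical_in (PolyIn {d..<n})
            (gen_ideal (PolyIn {d..<n}) (emb d ` gen_ideal (PolyIn {..<n}) (set hs)))
     \<longleftrightarrow> gen_ideal (PolyIn {..n}) (set hs \<union> {f * Var n - 1}) \<inter> PolyIn {..<d} \<noteq> {0}"
proof
  assume "emb d f \<in> radical_in (PolyIn {d..<n})
            (gen_ideal (PolyIn {d..<n}) (emb d ` gen_ideal (PolyIn {..<n}) (set hs)))"
  then obtain k where "emb d f ^ k \<in> gen_ideal (PolyIn {d..<n}) (emb d ` gen_ideal (PolyIn {..<n}) (set hs))"
    unfolding radical_in_def by blast
  then show "gen_ideal (PolyIn {..n}) (set hs \<union> {f * Var n - 1}) \<inter> PolyIn {..<d} \<noteq> {0}"
    by (rule emb_power_in_ideal_imp_inter_nonzero[OF assms(1,3)])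
next
  assume "gen_ideal (PolyIn {..n}) (set hs \<union> {f * Var n - 1}) \<inter> PolyIn {..<d} \<noteq> {0}"
  moreover have "0 \<in> gen_ideal (PolyIn {..n}) (set hs \<union> {f * Var n - 1}) \<inter> PolyIn {..<d}"
    by (simp add: gen_ideal_zero)
  ultimately obtain g where "g \<in> gen_ideal (PolyIn {..n}) (set hs \<union> {f * Var n - 1})"
    "g \<in> PolyIn {..<d}" "g \<noteq> 0"
    by blast
  then obtain N where "emb d f ^ N \<in> gen_ideal (PolyIn {d..<n}) (emb d ` set hs)"
    using inter_nonzero_imp_emb_power_in_ideal[OF assms(1-3)] by blast
  also have "\<dots> \<subseteq> gen_ideal (PolyIn {d..<n}) (emb d ` gen_ideal (PolyIn {..<n}) (set hs))"
    by (intro gen_ideal_mono image_mono) (auto intro: gen_ideal_gen)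
  finally show "emb d f \<in> radical_in (PolyIn {d..<n})
      (gen_ideal (PolyIn {d..<n}) (emb d ` gen_ideal (PolyIn {..<n}) (set hs)))"
    using emb_PolyIn[OF assms(3)] unfolding radical_in_def by blast
qed

end
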